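(* Let $P$ be a quasi-lattice ordered subsemigroup of a group $Q$ and $\Lambda$ an $(r,d)$-proper topological $P$-graph, with path space $\Omega$ and boundary path space $\partial\Omega$. Then (a) $\partial\Omega$ is a closed subset of $\Omega$; (b) if $A\in\partial\Omega$ and $n\in P$ with $A\cdot n\neq\emptyset$, then $A\cdot n\in\partial\Omega$; (c) if $B\in\partial\Omega$ and $\rho\in\Lambda$ satisfies $s(\rho)=r(B)$, then $\rho B\in\partial\Omega$.
   Context: Quasi-lattice ordered: $P\subset Q$ subsemigroup with $P\cap P^{-1}=\{e\}$ such that any two elements having a common upper bound (for $m\le n$ iff $n=mp$, $p\in P$) have a least upper bound. Topological $P$-graph: small category $\Lambda$, vertices $\Lambda^{(0)}\subset\Lambda$, $r,s:\Lambda\to\Lambda^{(0)}$, composition on composable pairs ($s(\lambda)=r(\mu)$); $\Lambda,\Lambda^{(0)}$ locally compact Hausdorff, $r,s$ continuous, $s$ a local homeomorphism, inclusion continuous, composition continuous and open; continuous $d:\Lambda\to P$ multiplicative, $e$ on vertices, with composition $\Lambda^m*\Lambda^n\to\Lambda^{mn}$ a homeomorphism. $(r,d)$-proper: $(r,d):\Lambda\to\Lambda^{(0)}\times P$ proper. $\mu\le\lambda$ iff $\lambda=\mu\nu$. $\Omega$: nonempty closed hereditary directed subsets of $\Lambda$ with the relative Fell topology; every $A\in\Omega$ is contained in $r^{-1}(x)$ for a unique vertex $x=:r(A)$. $A\cdot n=\{\nu:\exists\mu\in\Lambda^n,\mu\nu\in A\}$; $\rho B=\bigcup_{\nu\in B}\{\lambda:\lambda\le\rho\nu\}$.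 $E\subset\Lambda$ is exhaustive if for every $\lambda$ with $r(\lambda)\in r(E)$ there is $\mu\in E$ such that $\lambda,\mu$ have a common upper bound. For $A\in\Omega$, $\lambda\in A$ is extendable in $A$ if for every compact exhaustive $E$ with $r(E)$ a neighborhood of $s(\lambda)$ there is $\mu\in E$ with $\lambda\mu\in A$. $A$ is a boundary path if all its elements are extendable in $A$; $\partial\Omega$ is the set of boundary paths. *)

theory Defs
  imports "HOL-Analysis.Analysis"
begin

text \<open>The group Q is a type of class group_add (not necessarily commutative); the group
 operation is written additively, e is 0 and inverses are unary minus.\<close>

definition qle :: "'q::group_add set \<Rightarrow> 'q \<Rightarrow> 'q \<Rightarrow> bool" where
  "qle P m n \<longleftrightarrow> (\<exists>p\<in>P. n = m + p)"

definition quasi_lattice_ordered :: "'q::group_add set \<Rightarrow> bool" where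
  "quasi_lattice_ordered P \<longleftrightarrow>
     (\<forall>a\<in>P. \<forall>b\<in>P. a + b \<in> P) \<and>
     {x \<in> P. - x \<in> P} = {0} \<and>
     (\<forall>m\<in>P. \<forall>n\<in>P. (\<exists>k\<in>P. qle P m k \<and> qle P n k) \<longrightarrow>
        (\<exists>l\<in>P. qle P m l \<and> qle P n l \<and> (\<forall>k\<in>P. qle P m k \<and> qle P n k \<longrightarrow> qle P l k)))"

text \<open>Lambda = topspace T (with topology T); the vertex set V \<subseteq> Lambda carries its own topology TV
 (topspace TV = V).  Composition cmp x y (written x y in the paper) is only meaningful on
 composable pairs, i.e. s x = r y.\<close>

definition composable_pairs :: "('a \<Rightarrow> 'a) \<Rightarrow> ('a \<Rightarrow> 'a) \<Rightarrow> 'a set \<Rightarrow> ('a \<times> 'a) set" where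
  "composable_pairs r s L = {(x, y). x \<in> L \<and> y \<in> L \<and> s x = r y}"

definition local_homeomorphism :: "'a topology \<Rightarrow> 'b topology \<Rightarrow> ('a \<Rightarrow> 'b) \<Rightarrow> bool" where
  "local_homeomorphism X Y f \<longleftrightarrow>
     f ` topspace X \<subseteq> topspace Y \<and>
     (\<forall>x\<in>topspace X. \<exists>U. openin X U \<and> x \<in> U \<and> openin Y (f ` U) \<and>
        homeomorphic_map (subtopology X U) (subtopology Y (f ` U)) f)"

definition top_P_graph ::
  "'q::group_add set \<Rightarrow> 'a topology \<Rightarrow> 'a topology \<Rightarrow> ('a \<Rightarrow> 'a) \<Rightarrow> ('a \<Rightarrow> 'a)
     \<Rightarrow> ('a \<Rightarrow> 'a \<Rightarrow> 'a) \<Rightarrow> ('a \<Rightarrow> 'q) \<Rightarrow> bool" where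
  "top_P_graph P T TV r s cmp d \<longleftrightarrow>
     (let L = topspace T; V = topspace TV in
     \<comment> \<open>small category structure\<close>
     V \<subseteq> L \<and>
     (\<forall>x\<in>L. r x \<in> V \<and> s x \<in> V) \<and>
     (\<forall>v\<in>V. r v = v \<and> s v = v) \<and>
     (\<forall>x\<in>L. cmp (r x) x = x \<and> cmp x (s x) = x) \<and>
     (\<forall>x\<in>L. \<forall>y\<in>L. s x = r y \<longrightarrow> cmp x y \<in> L \<and> r (cmp x y) = r x \<and> s (cmp x y) = s y) \<and>
     (\<forall>x\<in>L. \<forall>y\<in>L. \<forall>z\<in>L. s x = r y \<longrightarrow> s y = r z \<longrightarrow> cmp (cmp x y) z = cmp x (cmp y z)) \<and>
     \<comment> \<open>topology\<close>
     locally_compact_space T \<and> Hausdorff_space T \<and>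
     locally_compact_space TV \<and> Hausdorff_space TV \<and>
     continuous_map T TV r \<and> continuous_map T TV s \<and>
     local_homeomorphism T TV s \<and>
     continuous_map TV T id \<and>
     continuous_map (subtopology (prod_topology T T) (composable_pairs r s L)) T (\<lambda>(x, y). cmp x y) \<and>
     open_map (subtopology (prod_topology T T) (composable_pairs r s L)) T (\<lambda>(x, y). cmp x y) \<and>
     \<comment> \<open>degree functor\<close>
     continuous_map T (discrete_topology P) d \<and>
     (\<forall>x\<in>L. \<forall>y\<in>L. s x = r y \<longrightarrow> d (cmp x y) = d x + d y) \<and>
     (\<forall>v\<in>V. d v = 0) \<and>
     \<comment> \<open>unique factorisation: composition Lambda^m * Lambda^n \<rightarrow> Lambda^(mn) is a homeomorphism\<close>
     (\<forall>m\<in>P. \<forall>n\<in>P.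
        homeomorphic_map
          (subtopology (prod_topology T T) {(x, y). (x, y) \<in> composable_pairs r s L \<and> d x = m \<and> d y = n})
          (subtopology T {z \<in> L. d z = m + n})
          (\<lambda>(x, y). cmp x y)))"

definition rd_proper ::
  "'q::group_add set \<Rightarrow> 'a topology \<Rightarrow> 'a topology \<Rightarrow> ('a \<Rightarrow> 'a) \<Rightarrow> ('a \<Rightarrow> 'q) \<Rightarrow> bool" where
  "rd_proper P T TV r d \<longleftrightarrow>
     continuous_map T (prod_topology TV (discrete_topology P)) (\<lambda>x. (r x, d x)) \<and>
     proper_map T (prod_topology TV (discrete_topology P)) (\<lambda>x. (r x, d x))"

definition path_le :: "'a set \<Rightarrow> ('a \<Rightarrow> 'a) \<Rightarrow> ('a \<Rightarrow> 'a) \<Rightarrow> ('a \<Rightarrow> 'a \<Rightarrow> 'a) \<Rightarrow> 'a \<Rightarrow> 'a \<Rightarrow> bool" where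
  "path_le L r s cmp mu lam \<longleftrightarrow> mu \<in> L \<and> lam \<in> L \<and> (\<exists>nu\<in>L. s mu = r nu \<and> lam = cmp mu nu)"

definition common_upper_bound ::
  "'a set \<Rightarrow> ('a \<Rightarrow> 'a) \<Rightarrow> ('a \<Rightarrow> 'a) \<Rightarrow> ('a \<Rightarrow> 'a \<Rightarrow> 'a) \<Rightarrow> 'a \<Rightarrow> 'a \<Rightarrow> 'a \<Rightarrow> bool" where
  "common_upper_bound L r s cmp x y z \<longleftrightarrow> path_le L r s cmp x z \<and> path_le L r s cmp y z"

definition Fell_topology :: "'a topology \<Rightarrow> 'a set topology" where
  "Fell_topology X = topology_generated_by
     ({{A. closedin X A \<and> A \<inter> K = {}} | K. compactin X K} \<union>
      {{A. closedin X A \<and> A \<inter> W \<noteq> {}} | W. openin X W})"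

definition path_space ::
  "'a topology \<Rightarrow> ('a \<Rightarrow> 'a) \<Rightarrow> ('a \<Rightarrow> 'a) \<Rightarrow> ('a \<Rightarrow> 'a \<Rightarrow> 'a) \<Rightarrow> 'a set set" where
  "path_space T r s cmp =
     {A. A \<noteq> {} \<and> closedin T A \<and>
         (\<forall>lam\<in>A. \<forall>mu. path_le (topspace T) r s cmp mu lam \<longrightarrow> mu \<in> A) \<and>
         (\<forall>x\<in>A. \<forall>y\<in>A. \<exists>z\<in>A. common_upper_bound (topspace T) r s cmp x y z)}"

definition path_space_topology ::
  "'a topology \<Rightarrow> ('a \<Rightarrow> 'a) \<Rightarrow> ('a \<Rightarrow> 'a) \<Rightarrow> ('a \<Rightarrow> 'a \<Rightarrow> 'a) \<Rightarrow> 'a set topology" where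
  "path_space_topology T r s cmp = subtopology (Fell_topology T) (path_space T r s cmp)"

definition range_vertex :: "'a set \<Rightarrow> ('a \<Rightarrow> 'a) \<Rightarrow> 'a set \<Rightarrow> 'a" where
  "range_vertex V r A = (THE x. x \<in> V \<and> (\<forall>lam\<in>A. r lam = x))"

definition shift_path ::
  "'a set \<Rightarrow> ('a \<Rightarrow> 'a) \<Rightarrow> ('a \<Rightarrow> 'a) \<Rightarrow> ('a \<Rightarrow> 'a \<Rightarrow> 'a) \<Rightarrow> ('a \<Rightarrow> 'q) \<Rightarrow> 'a set \<Rightarrow> 'q \<Rightarrow> 'a set" where
  "shift_path L r s cmp d A n = {nu \<in> L. \<exists>mu\<in>L. d mu = n \<and> s mu = r nu \<and> cmp mu nu \<in> A}"

definition prefix_path ::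
  "'a set \<Rightarrow> ('a \<Rightarrow> 'a) \<Rightarrow> ('a \<Rightarrow> 'a) \<Rightarrow> ('a \<Rightarrow> 'a \<Rightarrow> 'a) \<Rightarrow> 'a \<Rightarrow> 'a set \<Rightarrow> 'a set" where
  "prefix_path L r s cmp rho B = (\<Union>nu\<in>B. {lam. path_le L r s cmp lam (cmp rho nu)})"

definition exhaustive ::
  "'a set \<Rightarrow> ('a \<Rightarrow> 'a) \<Rightarrow> ('a \<Rightarrow> 'a) \<Rightarrow> ('a \<Rightarrow> 'a \<Rightarrow> 'a) \<Rightarrow> 'a set \<Rightarrow> bool" where
  "exhaustive L r s cmp E \<longleftrightarrow> E \<subseteq> L \<and>
     (\<forall>lam\<in>L. r lam \<in> r ` E \<longrightarrow> (\<exists>mu\<in>E. \<exists>z. common_upper_bound L r s cmp lam mu z))"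

definition extendable ::
  "'a topology \<Rightarrow> 'a topology \<Rightarrow> ('a \<Rightarrow> 'a) \<Rightarrow> ('a \<Rightarrow> 'a) \<Rightarrow> ('a \<Rightarrow> 'a \<Rightarrow> 'a) \<Rightarrow> 'a set \<Rightarrow> 'a \<Rightarrow> bool" where
  "extendable T TV r s cmp A lam \<longleftrightarrow> lam \<in> A \<and>
     (\<forall>E. compactin T E \<and> exhaustive (topspace T) r s cmp E \<and>
          (\<exists>U. openin TV U \<and> s lam \<in> U \<and> U \<subseteq> r ` E) \<longrightarrow>
          (\<exists>mu\<in>E. s lam = r mu \<and> cmp lam mu \<in> A))"

definition boundary_path_space ::
  "'a topology \<Rightarrow> 'a topology \<Rightarrow> ('a \<Rightarrow> 'a) \<Rightarrow> ('a \<Rightarrow> 'a) \<Rightarrow> ('a \<Rightarrow> 'a \<Rightarrow> 'a) \<Rightarrow> 'a set set" where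
  "boundary_path_space T TV r s cmp =
     {A \<in> path_space T r s cmp. \<forall>lam\<in>A. extendable T TV r s cmp A lam}"

end

theory Submission
  imports Defs
begin

text \<open>
  A path contains at most one element of each degree, since two elements of the same degree
  with a common upper bound coincide by unique factorisation.  Hence a path A that cannot extend
  some \<lambda> \<in> A through a compact exhaustive set E is separated from all boundary paths by the
  Fell-open condition "meets W and misses K E", where W \<subseteq> K are an open and a compact
  neighbourhood of \<lambda> inside its degree level; this gives (a).  For (b), A \<cdot> n is the set of
  continuations in A of its unique element of degree n, and extensions in A transport to it.  For (c), the point is that extendability passes
  from \<zeta> = \<lambda>\<gamma> down to \<lambda>: given E at s(\<lambda>), the paths b with \<gamma>b = \<mu>a, \<mu> \<in> E, and d(\<gamma>b) the least
  upper bound of d(\<gamma>) and d(\<mu>) form an exhaustive set at s(\<zeta>).  Only finitely many degrees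
  occur, so (r,d)-properness makes it compact, and a continuous local inverse of s lets the
  construction run over a whole neighbourhood of \<gamma>.
\<close>

definition qlub :: "'q::group_add set \<Rightarrow> 'q \<Rightarrow> 'q \<Rightarrow> 'q" where
  "qlub P a b = (SOME l. l \<in> P \<and> qle P a l \<and> qle P b l \<and> (\<forall>k\<in>P. qle P a k \<and> qle P b k \<longrightarrow> qle P l k))"

lemma qlub:
  assumes "quasi_lattice_ordered P" "a \<in> P" "b \<in> P" "k \<in> P" "qle P a k" "qle P b k"
  shows "qlub P a b \<in> P" "qle P a (qlub P a b)" "qle P b (qlub P a b)" "qle P (qlub P a b) k"
proof -
  have "\<exists>l. l \<in> P \<and> qle P a l \<and> qle P b l \<and> (\<forall>k\<in>P. qle P a k \<and> qle P b k \<longrightarrow> qle P l k)"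
    using assms unfolding quasi_lattice_ordered_def by blast
  then have "qlub P a b \<in> P \<and> qle P a (qlub P a b) \<and> qle P b (qlub P a b) \<and>
      (\<forall>k\<in>P. qle P a k \<and> qle P b k \<longrightarrow> qle P (qlub P a b) k)"
    unfolding qlub_def by (rule someI_ex)
  then show "qlub P a b \<in> P" "qle P a (qlub P a b)" "qle P b (qlub P a b)" "qle P (qlub P a b) k"
    using assms by blast+
qed

lemma local_homeomorphism_imp_openin_image:
  assumes f: "local_homeomorphism X Y f" and W: "openin X W"
  shows "openin Y (f ` W)"
proof -
  have "\<exists>N. openin Y N \<and> y \<in> N \<and> N \<subseteq> f ` W" if "y \<in> f ` W" for y
  proof -
    obtain x where x: "x \<in> W" "y = f x"
      using \<open>y \<in> f ` W\<close> by blast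
    then obtain U where U: "openin X U" "x \<in> U" "openin Y (f ` U)"
        "homeomorphic_map (subtopology X U) (subtopology Y (f ` U)) f"
      using f openin_subset[OF W] unfolding local_homeomorphism_def by blast
    have "openin (subtopology X U) (W \<inter> U)"
      using W openin_subtopology_Int by blast
    then have "openin (subtopology Y (f ` U)) (f ` (W \<inter> U))"
      using homeomorphic_imp_open_map[OF U(4)] unfolding open_map_def by blast
    then have "openin Y (f ` (W \<inter> U))"
      using openin_trans_full U(3) by blast
    then show ?thesis
      using x U(2) by blast
  qed
  then show ?thesis
    using openin_subopen by blast
qed

lemma compactin_closed_preimage:
  assumes "compactin X C" "continuous_map (subtopology X C) Y h" "closedin Y Z"
  shows "compactin X {x \<in> C. h x \<in> Z}"
proof -
  have "closedin (subtopology X C) {x \<in> topspace (subtopology X C). h x \<in> Z}"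
    using closedin_continuous_map_preimage assms(2,3) by blast
  moreover have "{x \<in> topspace (subtopology X C). h x \<in> Z} = {x \<in> C. h x \<in> Z}"
    using compactin_subset_topspace[OF assms(1)] by auto
  ultimately have "compactin (subtopology X C) {x \<in> C. h x \<in> Z}"
    using closedin_compact_space compact_space_subtopology[OF assms(1)] by metis
  then show ?thesis
    using compactin_subtopology by blast
qed

locale P_graph =
  fixes P :: "'q::group_add set"
    and T TV :: "'a topology"
    and r s :: "'a \<Rightarrow> 'a"
    and cmp :: "'a \<Rightarrow> 'a \<Rightarrow> 'a"
    and d :: "'a \<Rightarrow> 'q"
  assumes P_graph: "top_P_graph P T TV r s cmp d"
begin

abbreviation "L \<equiv> topspace T"
abbreviation "V \<equiv> topspace TV"

lemma vertices_subset: "V \<subseteq> L"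
  using P_graph unfolding top_P_graph_def Let_def by blast

lemma r_in_vertices: "x \<in> L \<Longrightarrow> r x \<in> V"
  using P_graph unfolding top_P_graph_def Let_def by blast

lemma s_in_vertices: "x \<in> L \<Longrightarrow> s x \<in> V"
  using P_graph unfolding top_P_graph_def Let_def by blast

lemma r_vertex: "v \<in> V \<Longrightarrow> r v = v"
  using P_graph unfolding top_P_graph_def Let_def by blast

lemma cmp_s_right: "x \<in> L \<Longrightarrow> cmp x (s x) = x"
  using P_graph unfolding top_P_graph_def Let_def by blast

lemma cmp_closed: "x \<in> L \<Longrightarrow> y \<in> L \<Longrightarrow> s x = r y \<Longrightarrow> cmp x y \<in> L"
  using P_graph unfolding top_P_graph_def Let_def by blast

lemma r_cmp: "x \<in> L \<Longrightarrow> y \<in> L \<Longrightarrow> s x = r y \<Longrightarrow> r (cmp x y) = r x"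
  using P_graph unfolding top_P_graph_def Let_def by blast

lemma s_cmp: "x \<in> L \<Longrightarrow> y \<in> L \<Longrightarrow> s x = r y \<Longrightarrow> s (cmp x y) = s y"
  using P_graph unfolding top_P_graph_def Let_def by blast

lemma cmp_assoc:
  "x \<in> L \<Longrightarrow> y \<in> L \<Longrightarrow> z \<in> L \<Longrightarrow> s x = r y \<Longrightarrow> s y = r z \<Longrightarrow> cmp (cmp x y) z = cmp x (cmp y z)"
  using P_graph unfolding top_P_graph_def Let_def by blast

lemma locally_compact: "locally_compact_space T"
  using P_graph unfolding top_P_graph_def Let_def by blast

lemma Hausdorff: "Hausdorff_space T"
  using P_graph unfolding top_P_graph_def Let_def by blast

lemma Hausdorff_vertices: "Hausdorff_space TV"
  using P_graph unfolding top_P_graph_def Let_def by blast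

lemma continuous_r: "continuous_map T TV r"
  using P_graph unfolding top_P_graph_def Let_def by blast

lemma continuous_s: "continuous_map T TV s"
  using P_graph unfolding top_P_graph_def Let_def by blast

lemma local_homeomorphism_s: "local_homeomorphism T TV s"
  using P_graph unfolding top_P_graph_def Let_def by blast

lemma continuous_cmp:
  "continuous_map (subtopology (prod_topology T T) (composable_pairs r s L)) T (\<lambda>(x, y). cmp x y)"
  using P_graph unfolding top_P_graph_def Let_def by blast

lemma continuous_d: "continuous_map T (discrete_topology P) d"
  using P_graph unfolding top_P_graph_def Let_def by blast

lemma d_cmp: "x \<in> L \<Longrightarrow> y \<in> L \<Longrightarrow> s x = r y \<Longrightarrow> d (cmp x y) = d x + d y"
  using P_graph unfolding top_P_graph_def Let_def by blast

lemma factorisation_homeomorphism: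
  "m \<in> P \<Longrightarrow> n \<in> P \<Longrightarrow> homeomorphic_map
     (subtopology (prod_topology T T) {(x, y). (x, y) \<in> composable_pairs r s L \<and> d x = m \<and> d y = n})
     (subtopology T {z \<in> L. d z = m + n})
     (\<lambda>(x, y). cmp x y)"
  using P_graph unfolding top_P_graph_def Let_def by blast

lemma d_in_P: "x \<in> L \<Longrightarrow> d x \<in> P"
  using continuous_d unfolding continuous_map_def by auto

lemma factorisation_unique:
  assumes "x \<in> L" "y \<in> L" "x' \<in> L" "y' \<in> L" "s x = r y" "s x' = r y'" "d x = d x'"
    and "cmp x y = cmp x' y'"
  shows "x = x' \<and> y = y'"
proof -
  have "d x + d y = d x + d y'"
    using assms d_cmp by metis
  then have dy: "d y = d y'" by simp
  let ?X = "topspace (subtopology (prod_topology T T)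
              {(x, y). (x, y) \<in> composable_pairs r s L \<and> d x = d x' \<and> d y = d y'})"
  have "inj_on (\<lambda>(x, y). cmp x y) ?X"
    using homeomorphic_imp_injective_map[OF factorisation_homeomorphism[OF d_in_P d_in_P]] assms
    by blast
  moreover have "(x, y) \<in> ?X" "(x', y') \<in> ?X"
    using assms dy unfolding composable_pairs_def by auto
  ultimately show ?thesis
    using assms(8) inj_onD[of "\<lambda>(x, y). cmp x y" _ "(x, y)" "(x', y')"] by auto
qed

lemma factorisation_exists:
  assumes "z \<in> L" "m \<in> P" "n \<in> P" "d z = m + n"
  obtains x y where "x \<in> L" "y \<in> L" "s x = r y" "d x = m" "d y = n" "cmp x y = z"
proof -
  have "z \<in> topspace (subtopology T {z \<in> L. d z = m + n})"
    using assms by auto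
  then obtain p where
      "p \<in> topspace (subtopology (prod_topology T T)
              {(x, y). (x, y) \<in> composable_pairs r s L \<and> d x = m \<and> d y = n})"
      "(\<lambda>(x, y). cmp x y) p = z"
    using homeomorphic_imp_surjective_map[OF factorisation_homeomorphism[OF assms(2,3)]]
    by (metis (no_types, lifting) imageE)
  then show ?thesis
    using that unfolding composable_pairs_def by auto
qed

lemma path_le_refl: "x \<in> L \<Longrightarrow> path_le L r s cmp x x"
  unfolding path_le_def using s_in_vertices vertices_subset r_vertex cmp_s_right by (metis subsetD)

lemma path_le_cmp: "x \<in> L \<Longrightarrow> y \<in> L \<Longrightarrow> s x = r y \<Longrightarrow> path_le L r s cmp x (cmp x y)"
  unfolding path_le_def using cmp_closed by blast

lemma path_le_imp_r_eq: "path_le L r s cmp x y \<Longrightarrow> r x = r y"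
  unfolding path_le_def using r_cmp by auto

lemma path_le_trans:
  assumes "path_le L r s cmp x y" "path_le L r s cmp y z"
  shows "path_le L r s cmp x z"
proof -
  obtain u v where u: "u \<in> L" "s x = r u" "y = cmp x u" and v: "v \<in> L" "s y = r v" "z = cmp y v"
    and L: "x \<in> L" "y \<in> L" "z \<in> L"
    using assms unfolding path_le_def by blast
  have uv: "s u = r v"
    using u v L s_cmp by metis
  then have "z = cmp x (cmp u v)"
    using cmp_assoc u v L by metis
  moreover have "cmp u v \<in> L" "r (cmp u v) = s x"
    using cmp_closed r_cmp u v uv by metis+
  ultimately show ?thesis
    unfolding path_le_def using L by metis
qed

lemma common_upper_bound_same_degree:
  assumes "x \<in> L" "x' \<in> L" "d x = d x'" "common_upper_bound L r s cmp x x' z"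
  shows "x = x'"
proof -
  obtain u u' where "u \<in> L" "s x = r u" "z = cmp x u" "u' \<in> L" "s x' = r u'" "z = cmp x' u'"
    using assms(4) unfolding common_upper_bound_def path_le_def by blast
  then show ?thesis
    using factorisation_unique assms by metis
qed

section \<open>Paths are closed, and the boundary is closed\<close>

lemma degree_level_openin: "openin T {x \<in> L. d x = n}"
proof -
  have "openin T {x \<in> L. d x \<in> {n} \<inter> P}"
    by (rule openin_continuous_map_preimage[OF continuous_d]) auto
  moreover have "{x \<in> L. d x \<in> {n} \<inter> P} = {x \<in> L. d x = n}"
    using d_in_P by auto
  ultimately show ?thesis by simp
qed

text \<open>Closedness comes for free: a directed set meets each (open) degree level in at most one
  point.\<close>

lemma directed_imp_closedin:
  assumes "S \<subseteq> L" "\<And>x y. x \<in> S \<Longrightarrow> y \<in> S \<Longrightarrow> \<exists>z. common_upper_bound L r s cmp x y z"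
  shows "closedin T S"
proof -
  have "\<exists>W. openin T W \<and> x \<in> W \<and> W \<subseteq> L - S" if x: "x \<in> L - S" for x
  proof -
    define W where "W = {y \<in> L. d y = d x}"
    have "closedin T (S \<inter> W)"
    proof (cases "S \<inter> W = {}")
      case False
      then obtain y0 where y0: "y0 \<in> S \<inter> W"
        by blast
      have "y = y0" if "y \<in> S \<inter> W" for y
        using that y0 assms common_upper_bound_same_degree[of y y0] unfolding W_def by auto
      then have "S \<inter> W = {y0}"
        using y0 by blast
      moreover have "y0 \<in> L"
        using y0 assms(1) by blast
      ultimately show ?thesis
        using t1_space_closedin_singleton Hausdorff_imp_t1_space[OF Hausdorff] by metis
    qed simp
    then have "openin T (W - S \<inter> W)"
      using openin_diff degree_level_openin unfolding W_def by blast
    moreover have "x \<in> W - S \<inter> W" "W - S \<inter> W \<subseteq> L - S"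
      using x unfolding W_def by auto
    ultimately show ?thesis by blast
  qed
  then have "openin T (L - S)"
    using openin_subopen by blast
  then show ?thesis
    using assms(1) closedin_def by blast
qed

lemma path_spaceI:
  assumes "A \<noteq> {}" "A \<subseteq> L"
    and "\<And>lam mu. lam \<in> A \<Longrightarrow> path_le L r s cmp mu lam \<Longrightarrow> mu \<in> A"
    and "\<And>x y. x \<in> A \<Longrightarrow> y \<in> A \<Longrightarrow> \<exists>z\<in>A. common_upper_bound L r s cmp x y z"
  shows "A \<in> path_space T r s cmp"
proof -
  have "closedin T A"
    using directed_imp_closedin[OF assms(2)] assms(4) by meson
  then show ?thesis
    unfolding path_space_def using assms(1,3,4) by blast
qed

lemma path_space_subset: "A \<in> path_space T r s cmp \<Longrightarrow> A \<subseteq> L"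
  unfolding path_space_def using closedin_subset by auto

lemma path_space_hereditary:
  "A \<in> path_space T r s cmp \<Longrightarrow> lam \<in> A \<Longrightarrow> path_le L r s cmp mu lam \<Longrightarrow> mu \<in> A"
  unfolding path_space_def by auto

lemma path_space_directed:
  "A \<in> path_space T r s cmp \<Longrightarrow> x \<in> A \<Longrightarrow> y \<in> A \<Longrightarrow> \<exists>z\<in>A. common_upper_bound L r s cmp x y z"
  unfolding path_space_def by auto

lemma path_space_same_degree:
  "A \<in> path_space T r s cmp \<Longrightarrow> x \<in> A \<Longrightarrow> y \<in> A \<Longrightarrow> d x = d y \<Longrightarrow> x = y"
  using path_space_directed path_space_subset common_upper_bound_same_degree by (metis subsetD)

lemma topspace_path_space_topology:
  "topspace (path_space_topology T r s cmp) = path_space T r s cmp"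
proof -
  let ?S = "{{A. closedin T A \<and> A \<inter> K = {}} | K. compactin T K} \<union>
            {{A. closedin T A \<and> A \<inter> W \<noteq> {}} | W. openin T W}"
  have "path_space T r s cmp \<subseteq> topspace (Fell_topology T)"
  proof
    fix A assume "A \<in> path_space T r s cmp"
    then have "A \<in> {A. closedin T A \<and> A \<inter> {} = {}}"
      unfolding path_space_def by simp
    moreover have "{A. closedin T A \<and> A \<inter> {} = {}} \<in> ?S"
      by (rule UnI1, rule CollectI, rule exI[of _ "{}"]) simp
    ultimately show "A \<in> topspace (Fell_topology T)"
      unfolding Fell_topology_def topology_generated_by_topspace by (rule UnionI[rotated])
  qed
  then show ?thesis
    unfolding path_space_topology_def by (simp add: Int_absorb1)
qed

lemma Fell_topology_openin_miss_meet:
  assumes "compactin T K" "openin T W"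
  shows "openin (Fell_topology T) ({C. closedin T C \<and> C \<inter> K = {}} \<inter> {C. closedin T C \<and> C \<inter> W \<noteq> {}})"
  unfolding Fell_topology_def
proof (rule openin_Int; rule topology_generated_by_Basis)
  show "{C. closedin T C \<and> C \<inter> K = {}} \<in> {{A. closedin T A \<and> A \<inter> K = {}} | K. compactin T K} \<union>
      {{A. closedin T A \<and> A \<inter> W \<noteq> {}} | W. openin T W}"
    using assms(1) by blast
  show "{C. closedin T C \<and> C \<inter> W \<noteq> {}} \<in> {{A. closedin T A \<and> A \<inter> K = {}} | K. compactin T K} \<union>
      {{A. closedin T A \<and> A \<inter> W \<noteq> {}} | W. openin T W}"
    using assms(2) by blast
qed

lemma compact_neighbourhood:
  assumes "openin T G" "x \<in> G"
  obtains U K where "openin T U" "compactin T K" "x \<in> U" "U \<subseteq> K" "K \<subseteq> G"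
proof -
  have "neighbourhood_base_of (\<lambda>C. compactin T C \<and> closedin T C) T"
    using locally_compact_regular_space_neighbourhood_base locally_compact
      locally_compact_Hausdorff_imp_regular_space Hausdorff by blast
  then show ?thesis
    using assms that unfolding neighbourhood_base_of by blast
qed

lemma composable_pairs_closedin: "closedin (prod_topology T T) (composable_pairs r s L)"
proof -
  have "closedin (prod_topology T T) {p \<in> topspace (prod_topology T T). (s \<circ> fst) p = (r \<circ> snd) p}"
    by (rule closedin_continuous_maps_eq[OF Hausdorff_vertices];
        rule continuous_map_compose[OF continuous_map_fst continuous_s]
          continuous_map_compose[OF continuous_map_snd continuous_r])
  moreover have "{p \<in> topspace (prod_topology T T). (s \<circ> fst) p = (r \<circ> snd) p} = composable_pairs r s L"
    unfolding composable_pairs_def by auto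
  ultimately show ?thesis by simp
qed

lemma compactin_cmp_image:
  assumes "compactin T K" "compactin T E"
  shows "compactin T ((\<lambda>(x, y). cmp x y) ` ((K \<times> E) \<inter> composable_pairs r s L))"
proof -
  have "compactin (prod_topology T T) ((K \<times> E) \<inter> composable_pairs r s L)"
    using compact_Int_closedin composable_pairs_closedin assms compactin_Times by blast
  then have "compactin (subtopology (prod_topology T T) (composable_pairs r s L))
               ((K \<times> E) \<inter> composable_pairs r s L)"
    using compactin_subtopology by blast
  then show ?thesis
    using image_compactin continuous_cmp by blast
qed

text \<open>A boundary path meeting W at x contains some x\<mu> with \<mu> \<in> E, which lies in K E; but A
  misses K E, since its only element of degree d(\<lambda>) is \<lambda> itself.\<close>

lemma not_extendable_imp_Fell_neighbourhood:
  assumes A: "A \<in> path_space T r s cmp" and lam: "lam \<in> A"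
    and not_ext: "\<not> extendable T TV r s cmp A lam"
  obtains N where "openin (Fell_topology T) N" "A \<in> N"
    "N \<inter> boundary_path_space T TV r s cmp = {}"
proof -
  obtain E U where E: "compactin T E" "exhaustive L r s cmp E"
      "openin TV U" "s lam \<in> U" "U \<subseteq> r ` E"
    and A_misses: "\<not> (\<exists>mu\<in>E. s lam = r mu \<and> cmp lam mu \<in> A)"
    using lam not_ext unfolding extendable_def by blast
  have lamL: "lam \<in> L"
    using path_space_subset A lam by blast
  define G where "G = {x \<in> L. d x = d lam} \<inter> {x \<in> L. s x \<in> U}"
  have "openin T G"
    unfolding G_def using degree_level_openin openin_continuous_map_preimage[OF continuous_s E(3)]
    by blast
  moreover have "lam \<in> G"
    unfolding G_def using lamL E(4) by auto
  ultimately obtain W K where WK: "openin T W" "compactin T K" "lam \<in> W" "W \<subseteq> K" "K \<subseteq> G"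
    using compact_neighbourhood by blast
  define KE where "KE = (\<lambda>(x, y). cmp x y) ` ((K \<times> E) \<inter> composable_pairs r s L)"
  define N where "N = {C. closedin T C \<and> C \<inter> KE = {}} \<inter> {C. closedin T C \<and> C \<inter> W \<noteq> {}}"
  have "openin (Fell_topology T) N"
    unfolding N_def KE_def
    using Fell_topology_openin_miss_meet compactin_cmp_image WK(1,2) E(1) by blast
  moreover have "A \<inter> KE = {}"
  proof (rule ccontr)
    assume "A \<inter> KE \<noteq> {}"
    then obtain x mu where xmu: "x \<in> K" "mu \<in> E" "x \<in> L" "mu \<in> L" "s x = r mu" "cmp x mu \<in> A"
      unfolding KE_def composable_pairs_def by auto
    have "x \<in> A"
      using path_space_hereditary[OF A xmu(6)] path_le_cmp xmu by blast
    moreover have "d x = d lam"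
      using xmu WK unfolding G_def by auto
    ultimately have "x = lam"
      using path_space_same_degree A lam by blast
    then show False
      using A_misses xmu by blast
  qed
  then have "A \<in> N"
    unfolding N_def using A lam WK(3) unfolding path_space_def by blast
  moreover have "C \<notin> boundary_path_space T TV r s cmp" if C: "C \<in> N" for C
  proof
    assume CB: "C \<in> boundary_path_space T TV r s cmp"
    obtain x where x: "x \<in> C" "x \<in> W"
      using C unfolding N_def by blast
    have "s x \<in> U" "x \<in> L" "x \<in> K"
      using x WK unfolding G_def by auto
    then obtain mu where mu: "mu \<in> E" "s x = r mu" "cmp x mu \<in> C"
      using CB x E unfolding boundary_path_space_def extendable_def by blast
    have "mu \<in> L"
      using E(2) mu(1) unfolding exhaustive_def by blast
    then have "cmp x mu \<in> KE"
      unfolding KE_def composable_pairs_def using \<open>x \<in> L\<close> \<open>x \<in> K\<close> mu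
      by (auto intro!: image_eqI[of _ _ "(x, mu)"])
    then show False
      using C mu(3) unfolding N_def by blast
  qed
  ultimately show ?thesis
    using that by blast
qed

lemma boundary_path_space_closedin:
  "closedin (path_space_topology T r s cmp) (boundary_path_space T TV r s cmp)"
proof -
  let ?\<Omega> = "path_space T r s cmp" and ?B = "boundary_path_space T TV r s cmp"
  have "\<exists>N'. openin (path_space_topology T r s cmp) N' \<and> A \<in> N' \<and> N' \<subseteq> ?\<Omega> - ?B"
    if A: "A \<in> ?\<Omega> - ?B" for A
  proof -
    obtain lam where "lam \<in> A" "\<not> extendable T TV r s cmp A lam"
      using A unfolding boundary_path_space_def by blast
    then obtain N where "openin (Fell_topology T) N" "A \<in> N" "N \<inter> ?B = {}"
      using not_extendable_imp_Fell_neighbourhood A by blast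
    then show ?thesis
      using A unfolding path_space_topology_def openin_subtopology by (intro exI[of _ "N \<inter> ?\<Omega>"]) blast
  qed
  then have "openin (path_space_topology T r s cmp) (?\<Omega> - ?B)"
    by (subst openin_subopen) blast
  moreover have "?B \<subseteq> ?\<Omega>"
    unfolding boundary_path_space_def by blast
  ultimately show ?thesis
    unfolding closedin_def topspace_path_space_topology by blast
qed

section \<open>Shifting a boundary path\<close>

definition residual :: "'a set \<Rightarrow> 'a \<Rightarrow> 'a set" where
  "residual A mu0 = {nu \<in> L. s mu0 = r nu \<and> cmp mu0 nu \<in> A}"

lemma residual_in_path_space:
  assumes A: "A \<in> path_space T r s cmp" and mu0: "mu0 \<in> L" and ne: "residual A mu0 \<noteq> {}"
  shows "residual A mu0 \<in> path_space T r s cmp"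
proof (rule path_spaceI)
  show "residual A mu0 \<noteq> {}" "residual A mu0 \<subseteq> L"
    using ne unfolding residual_def by auto
next
  fix lam mu assume lam: "lam \<in> residual A mu0" and le: "path_le L r s cmp mu lam"
  then obtain b where b: "b \<in> L" "s mu = r b" "lam = cmp mu b" "mu \<in> L"
    unfolding path_le_def by blast
  have rmu: "r mu = s mu0"
    using path_le_imp_r_eq[OF le] lam unfolding residual_def by simp
  have "cmp mu0 lam = cmp (cmp mu0 mu) b"
    using cmp_assoc mu0 b rmu by metis
  moreover have "path_le L r s cmp (cmp mu0 mu) (cmp (cmp mu0 mu) b)"
    using path_le_cmp cmp_closed s_cmp mu0 b rmu by metis
  ultimately have "cmp mu0 mu \<in> A"
    using path_space_hereditary[OF A] lam unfolding residual_def by auto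
  then show "mu \<in> residual A mu0"
    using b rmu unfolding residual_def by auto
next
  fix x y assume x: "x \<in> residual A mu0" and y: "y \<in> residual A mu0"
  then obtain z where z: "z \<in> A" "common_upper_bound L r s cmp (cmp mu0 x) (cmp mu0 y) z"
    using path_space_directed[OF A] unfolding residual_def by blast
  then obtain a b where a: "a \<in> L" "s (cmp mu0 x) = r a" "z = cmp (cmp mu0 x) a"
    and b: "b \<in> L" "s (cmp mu0 y) = r b" "z = cmp (cmp mu0 y) b"
    unfolding common_upper_bound_def path_le_def by blast
  have xL: "x \<in> L" "s mu0 = r x" and yL: "y \<in> L" "s mu0 = r y"
    using x y unfolding residual_def by auto
  have sa: "s x = r a" "s y = r b"
    using a b xL yL s_cmp mu0 by auto
  have z_eq: "z = cmp mu0 (cmp x a)" "z = cmp mu0 (cmp y b)"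
    using cmp_assoc a b xL yL mu0 sa by auto
  have xa: "cmp x a \<in> L" "r (cmp x a) = s mu0" and yb: "cmp y b \<in> L" "r (cmp y b) = s mu0"
    using cmp_closed r_cmp xL yL a b sa by auto
  have "cmp x a = cmp y b"
    using factorisation_unique[OF mu0 xa(1) mu0 yb(1)] xa yb z_eq by metis
  moreover have "cmp x a \<in> residual A mu0"
    using xa z_eq z unfolding residual_def by auto
  moreover have "path_le L r s cmp x (cmp x a)" "path_le L r s cmp y (cmp y b)"
    using path_le_cmp xL yL a b sa by auto
  ultimately show "\<exists>z\<in>residual A mu0. common_upper_bound L r s cmp x y z"
    unfolding common_upper_bound_def by metis
qed

lemma extendable_residual:
  assumes mu0: "mu0 \<in> L" and lam: "lam \<in> residual A mu0"
    and ext: "extendable T TV r s cmp A (cmp mu0 lam)"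
  shows "extendable T TV r s cmp (residual A mu0) lam"
  unfolding extendable_def
proof (intro conjI lam allI impI)
  have lamL: "lam \<in> L" "s mu0 = r lam"
    using lam unfolding residual_def by auto
  fix E assume E: "compactin T E \<and> exhaustive L r s cmp E \<and> (\<exists>U. openin TV U \<and> s lam \<in> U \<and> U \<subseteq> r ` E)"
  have s_eq: "s (cmp mu0 lam) = s lam"
    using s_cmp mu0 lamL by auto
  then obtain mu where mu: "mu \<in> E" "s lam = r mu" "cmp (cmp mu0 lam) mu \<in> A"
    using ext E unfolding extendable_def by auto
  have muL: "mu \<in> L"
    using E mu unfolding exhaustive_def by blast
  have "cmp (cmp mu0 lam) mu = cmp mu0 (cmp lam mu)"
    using cmp_assoc mu0 lamL muL mu by auto
  moreover have "cmp lam mu \<in> L" "r (cmp lam mu) = s mu0"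
    using cmp_closed r_cmp lamL muL mu by auto
  ultimately show "\<exists>mu\<in>E. s lam = r mu \<and> cmp lam mu \<in> residual A mu0"
    using mu unfolding residual_def by auto
qed

lemma residual_in_boundary_path_space:
  assumes A: "A \<in> boundary_path_space T TV r s cmp" and mu0: "mu0 \<in> L"
    and ne: "residual A mu0 \<noteq> {}"
  shows "residual A mu0 \<in> boundary_path_space T TV r s cmp"
proof -
  have "extendable T TV r s cmp A (cmp mu0 lam)" if "lam \<in> residual A mu0" for lam
    using A that unfolding boundary_path_space_def residual_def by blast
  then show ?thesis
    using residual_in_path_space extendable_residual assms
    unfolding boundary_path_space_def by blast
qed

lemma shift_path_eq_residual:
  assumes A: "A \<in> path_space T r s cmp" and mu0: "mu0 \<in> A" "d mu0 = n"
  shows "shift_path L r s cmp d A n = residual A mu0"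
proof (intro set_eqI iffI)
  fix nu assume "nu \<in> shift_path L r s cmp d A n"
  then obtain mu where mu: "nu \<in> L" "mu \<in> L" "d mu = n" "s mu = r nu" "cmp mu nu \<in> A"
    unfolding shift_path_def by blast
  have "mu \<in> A"
    using path_space_hereditary[OF A mu(5)] path_le_cmp mu by blast
  then have "mu = mu0"
    using path_space_same_degree A mu0 mu(3) by blast
  then show "nu \<in> residual A mu0"
    using mu unfolding residual_def by auto
next
  fix nu assume "nu \<in> residual A mu0"
  then show "nu \<in> shift_path L r s cmp d A n"
    using mu0 path_space_subset[OF A] unfolding shift_path_def residual_def by blast
qed

lemma shift_path_in_boundary_path_space:
  assumes A: "A \<in> boundary_path_space T TV r s cmp"
    and ne: "shift_path L r s cmp d A n \<noteq> {}"
  shows "shift_path L r s cmp d A n \<in> boundary_path_space T TV r s cmp"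
proof -
  have AP: "A \<in> path_space T r s cmp"
    using A unfolding boundary_path_space_def by blast
  obtain nu0 mu0 where nm: "nu0 \<in> L" "mu0 \<in> L" "d mu0 = n" "s mu0 = r nu0" "cmp mu0 nu0 \<in> A"
    using ne unfolding shift_path_def by blast
  have "mu0 \<in> A"
    using path_space_hereditary[OF AP nm(5)] path_le_cmp nm by blast
  then show ?thesis
    using shift_path_eq_residual[OF AP _ nm(3)] residual_in_boundary_path_space[OF A nm(2)] ne
    by simp
qed

section \<open>Extending prefixes of boundary paths\<close>

lemma factorisation_through_degree:
  assumes x: "x \<in> L" and w: "w \<in> L" and xw: "s x = r w" and m: "m \<in> P"
    and "qle P (d x) m" "qle P m (d (cmp x w))"
  obtains w1 w2 where "w1 \<in> L" "w2 \<in> L" "s w1 = r w2" "w = cmp w1 w2"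
    "d w1 = - d x + m" "d w2 = - m + d (cmp x w)"
proof -
  obtain q where q: "q \<in> P" "m = d x + q"
    using assms(5) unfolding qle_def by blast
  obtain p where p: "p \<in> P" "d (cmp x w) = m + p"
    using assms(6) unfolding qle_def by blast
  have "d x + d w = d x + (q + p)"
    using d_cmp[OF x w xw] p q by (simp add: add.assoc)
  then obtain w1 w2 where "w1 \<in> L" "w2 \<in> L" "s w1 = r w2" "d w1 = q" "d w2 = p" "cmp w1 w2 = w"
    using factorisation_exists[OF w q(1) p(1)] by auto
  moreover have "- d x + m = q"
    using q(2) by (simp add: add.assoc[symmetric])
  moreover have "- m + d (cmp x w) = p"
    using p(2) by (simp add: add.assoc[symmetric])
  ultimately show ?thesis
    using that by simp
qed

text \<open>The witnesses come from cutting the common upper bound of \<gamma>\<eta> and \<mu> at degree m: its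
  prefix of degree m factors both as \<gamma>b and as \<mu>a.\<close>

lemma common_extension_at_degree:
  assumes gam: "gam \<in> L" and eta: "eta \<in> L" and mu: "mu \<in> L" and ge: "s gam = r eta"
    and cub: "common_upper_bound L r s cmp (cmp gam eta) mu z"
    and m: "m \<in> P" "qle P (d gam) m" "qle P (d mu) m" "qle P m (d z)"
  obtains b a w where "b \<in> L" "a \<in> L" "s gam = r b" "s mu = r a" "cmp gam b = cmp mu a"
    "d b = - d gam + m" "d a = - d mu + m" "common_upper_bound L r s cmp eta b w"
proof -
  obtain a1 where a1: "a1 \<in> L" "s (cmp gam eta) = r a1" "z = cmp (cmp gam eta) a1"
    using cub unfolding common_upper_bound_def path_le_def by blast
  obtain a2 where a2: "a2 \<in> L" "s mu = r a2" "z = cmp mu a2"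
    using cub unfolding common_upper_bound_def path_le_def by blast
  have ea: "s eta = r a1"
    using a1 s_cmp[OF gam eta ge] by simp
  define w where "w = cmp eta a1"
  have wL: "w \<in> L" and gw: "s gam = r w"
    using w_def cmp_closed r_cmp eta a1 ea ge by auto
  have zw: "z = cmp gam w"
    using w_def a1 cmp_assoc[OF gam eta a1(1) ge ea] by simp
  obtain w1 w2 where W: "w1 \<in> L" "w2 \<in> L" "s w1 = r w2" "w = cmp w1 w2" "d w1 = - d gam + m"
    using factorisation_through_degree[OF gam wL gw m(1,2)] m(4) zw by metis
  obtain b1 b2 where B: "b1 \<in> L" "b2 \<in> L" "s b1 = r b2" "a2 = cmp b1 b2" "d b1 = - d mu + m"
    using factorisation_through_degree[OF mu a2(1) a2(2) m(1,3)] m(4) a2 by metis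
  have gw1: "s gam = r w1" and mub1: "s mu = r b1"
    using W B gw a2 r_cmp by auto
  have "z = cmp (cmp gam w1) w2" "z = cmp (cmp mu b1) b2"
    using zw W a2 B cmp_assoc[OF gam W(1) W(2) gw1 W(3)] cmp_assoc[OF mu B(1) B(2) mub1 B(3)] by simp_all
  moreover have "d (cmp gam w1) = d (cmp mu b1)"
    using d_cmp[OF gam W(1) gw1] d_cmp[OF mu B(1) mub1] W(5) B(5) by (simp add: add.assoc[symmetric])
  ultimately have "cmp gam w1 = cmp mu b1"
    using factorisation_unique[OF cmp_closed[OF gam W(1) gw1] W(2) cmp_closed[OF mu B(1) mub1] B(2)]
      s_cmp[OF gam W(1) gw1] s_cmp[OF mu B(1) mub1] W(3) B(3) by metis
  moreover have "common_upper_bound L r s cmp eta w1 w"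
    unfolding common_upper_bound_def
    using path_le_cmp[OF eta a1(1) ea] path_le_cmp[OF W(1) W(2) W(3)] w_def W(4) by simp
  ultimately show ?thesis
    using that[of w1 b1 w] W(1,5) B(1,5) gw1 mub1 by simp
qed

lemma finite_degrees_of_compact: "compactin T E \<Longrightarrow> finite (d ` E)"
  using image_compactin[OF _ continuous_d] compactin_discrete_topology by blast

lemma path_le_imp_qle: "path_le L r s cmp x y \<Longrightarrow> qle P (d x) (d y)"
  unfolding path_le_def qle_def using d_cmp d_in_P by metis

lemma local_section_of_s:
  assumes "gam \<in> L"
  obtains U g where "openin T U" "gam \<in> U"
    "continuous_map (subtopology TV (s ` U)) T g" "\<And>x. x \<in> U \<Longrightarrow> g (s x) = x"
proof -
  obtain U where U: "openin T U" "gam \<in> U"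
      "homeomorphic_map (subtopology T U) (subtopology TV (s ` U)) s"
    using local_homeomorphism_s assms unfolding local_homeomorphism_def by blast
  then obtain g where g: "homeomorphic_maps (subtopology T U) (subtopology TV (s ` U)) s g"
    using homeomorphic_map_maps by blast
  then have "continuous_map (subtopology TV (s ` U)) T g"
    unfolding homeomorphic_maps_def using continuous_map_in_subtopology by blast
  moreover have "g (s x) = x" if "x \<in> U" for x
    using g that openin_subset[OF U(1)] unfolding homeomorphic_maps_def by auto
  ultimately show ?thesis
    using that U(1,2) by blast
qed

lemma continuous_map_cmp_section:
  assumes g: "continuous_map (subtopology TV W) T g" "\<And>v. v \<in> W \<Longrightarrow> g v \<in> L \<and> s (g v) = v"
    and C: "C \<subseteq> L" "r ` C \<subseteq> W"
  shows "continuous_map (subtopology T C) T (\<lambda>b. cmp (g (r b)) b)"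
proof -
  have "continuous_map (subtopology T C) (subtopology TV W) r"
    using continuous_map_from_subtopology[OF continuous_r] C(2)
    by (auto simp: continuous_map_in_subtopology)
  then have "continuous_map (subtopology T C) T (\<lambda>b. g (r b))"
    using continuous_map_compose[OF _ g(1)] unfolding o_def by blast
  then have "continuous_map (subtopology T C) (prod_topology T T) (\<lambda>b. (g (r b), b))"
    using continuous_map_from_subtopology[OF continuous_map_id] unfolding id_def
    by (intro continuous_map_pairedI) auto
  moreover have "(\<lambda>b. (g (r b), b)) \<in> topspace (subtopology T C) \<rightarrow> composable_pairs r s L"
    using g(2) C unfolding composable_pairs_def by auto
  ultimately have "continuous_map (subtopology T C) (subtopology (prod_topology T T) (composable_pairs r s L))
      (\<lambda>b. (g (r b), b))"
    by (simp add: continuous_map_in_subtopology)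
  from continuous_map_compose[OF this continuous_cmp] show ?thesis
    unfolding o_def by simp
qed

end

locale proper_P_graph = P_graph +
  assumes quasi_lattice: "quasi_lattice_ordered P"
    and rd_proper: "rd_proper P T TV r d"
begin

lemma compactin_r_d_preimage:
  assumes "compactin TV X" "finite D" "D \<subseteq> P"
  shows "compactin T {x \<in> L. r x \<in> X \<and> d x \<in> D}"
proof -
  have "compactin (prod_topology TV (discrete_topology P)) (X \<times> D)"
    using assms compactin_Times compactin_discrete_topology by blast
  then have "compactin T {x \<in> L. (r x, d x) \<in> X \<times> D}"
    using rd_proper unfolding rd_proper_def proper_map_alt by blast
  then show ?thesis
    by simp
qed

lemma compactin_section_pullback:
  assumes K: "compactin T K" "K \<subseteq> U"
    and g: "continuous_map (subtopology TV (s ` U)) T g" "\<And>x. x \<in> U \<Longrightarrow> g (s x) = x"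
    and U: "U \<subseteq> L" and D: "finite D" "D \<subseteq> P" and Z: "closedin T Z"
  shows "compactin T {b \<in> L. r b \<in> s ` K \<and> d b \<in> D \<and> cmp (g (r b)) b \<in> Z}"
proof -
  define C where "C = {b \<in> L. r b \<in> s ` K \<and> d b \<in> D}"
  have "compactin T C"
    unfolding C_def using compactin_r_d_preimage image_compactin[OF K(1) continuous_s] D by blast
  moreover have "continuous_map (subtopology T C) T (\<lambda>b. cmp (g (r b)) b)"
    by (rule continuous_map_cmp_section[OF g(1)]) (use g(2) U K(2) s_in_vertices in \<open>auto simp: C_def\<close>)
  ultimately have "compactin T {b \<in> C. cmp (g (r b)) b \<in> Z}"
    using compactin_closed_preimage Z by blast
  then show ?thesis
    unfolding C_def by (simp add: conj_assoc)
qed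

lemma exhaustive_common_extension:
  assumes E: "exhaustive L r s cmp E" and x: "x \<in> L" and eta: "eta \<in> L" and xe: "s x = r eta"
    and rx: "r x \<in> r ` E"
  obtains mu b a w where "mu \<in> E" "mu \<in> L" "b \<in> L" "a \<in> L" "s x = r b" "s mu = r a"
    "cmp x b = cmp mu a" "d b = - d x + qlub P (d x) (d mu)" "d a = - d mu + qlub P (d x) (d mu)"
    "common_upper_bound L r s cmp eta b w"
proof -
  have "r (cmp x eta) \<in> r ` E"
    using r_cmp[OF x eta xe] rx by simp
  then obtain mu z where mu: "mu \<in> E" "common_upper_bound L r s cmp (cmp x eta) mu z"
    using E cmp_closed[OF x eta xe] unfolding exhaustive_def by blast
  have muL: "mu \<in> L"
    using mu(1) E unfolding exhaustive_def by blast
  have "path_le L r s cmp x z" "path_le L r s cmp mu z"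
    using mu(2) path_le_trans path_le_cmp[OF x eta xe]
    unfolding common_upper_bound_def by blast+
  then have "qle P (d x) (d z)" "qle P (d mu) (d z)" "z \<in> L"
    using path_le_imp_qle unfolding path_le_def by blast+
  then have "qlub P (d x) (d mu) \<in> P" "qle P (d x) (qlub P (d x) (d mu))"
      "qle P (d mu) (qlub P (d x) (d mu))" "qle P (qlub P (d x) (d mu)) (d z)"
    using qlub[OF quasi_lattice] d_in_P x muL by metis+
  from common_extension_at_degree[OF x eta muL xe mu(2) this] that mu(1) muL show ?thesis
    by metis
qed

lemma pullback_along_compact:
  assumes E: "compactin T E" "exhaustive L r s cmp E"
    and K: "compactin T K" "K \<subseteq> U" "\<And>x. x \<in> K \<Longrightarrow> d x = n" "r ` K \<subseteq> r ` E"
    and g: "continuous_map (subtopology TV (s ` U)) T g" "\<And>x. x \<in> U \<Longrightarrow> g (s x) = x"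
    and U: "U \<subseteq> L"
  obtains F where "compactin T F" "F \<subseteq> L"
    "\<And>b. b \<in> F \<Longrightarrow> \<exists>x\<in>K. s x = r b \<and> (\<exists>mu\<in>E. \<exists>a\<in>L. s mu = r a \<and> cmp x b = cmp mu a)"
    "\<And>x eta. x \<in> K \<Longrightarrow> eta \<in> L \<Longrightarrow> s x = r eta \<Longrightarrow>
       \<exists>b\<in>F. r b = r eta \<and> (\<exists>w. common_upper_bound L r s cmp eta b w)"
proof -
  define D where "D = (\<lambda>p. - n + qlub P n p) ` d ` E \<inter> P"
  define Da where "Da = (\<lambda>p. - p + qlub P n p) ` d ` E \<inter> P"
  have fin: "finite D" "finite Da"
    unfolding D_def Da_def using finite_degrees_of_compact[OF E(1)] by auto
  define Z where
    "Z = (\<lambda>(x, y). cmp x y) ` ((E \<times> {a \<in> L. r a \<in> s ` E \<and> d a \<in> Da}) \<inter> composable_pairs r s L)"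
  have "Da \<subseteq> P"
    unfolding Da_def by blast
  then have "compactin T {a \<in> L. r a \<in> s ` E \<and> d a \<in> Da}"
    using compactin_r_d_preimage image_compactin[OF E(1) continuous_s] fin(2) by blast
  then have "compactin T Z"
    unfolding Z_def using compactin_cmp_image E(1) by blast
  then have Z: "closedin T Z"
    using compactin_imp_closedin Hausdorff by blast
  define F where "F = {b \<in> L. r b \<in> s ` K \<and> d b \<in> D \<and> cmp (g (r b)) b \<in> Z}"
  have "compactin T F"
    unfolding F_def using compactin_section_pullback[OF K(1,2) g U fin(1) _ Z] D_def by blast
  moreover have "\<exists>x\<in>K. s x = r b \<and> (\<exists>mu\<in>E. \<exists>a\<in>L. s mu = r a \<and> cmp x b = cmp mu a)"
    if b: "b \<in> F" for b
  proof -
    obtain x where x: "x \<in> K" "r b = s x"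
      using b unfolding F_def by blast
    then have "cmp x b \<in> Z"
      using b g(2) K(2) unfolding F_def by auto
    then show ?thesis
      using x unfolding Z_def composable_pairs_def by auto
  qed
  moreover have "\<exists>b\<in>F. r b = r eta \<and> (\<exists>w. common_upper_bound L r s cmp eta b w)"
    if x: "x \<in> K" and eta: "eta \<in> L" and xe: "s x = r eta" for x eta
  proof -
    have xL: "x \<in> L"
      using x K(2) U by blast
    obtain mu b a w where mu: "mu \<in> E" "mu \<in> L"
      and ba: "b \<in> L" "a \<in> L" "s x = r b" "s mu = r a" "cmp x b = cmp mu a"
        "d b = - d x + qlub P (d x) (d mu)" "d a = - d mu + qlub P (d x) (d mu)"
        "common_upper_bound L r s cmp eta b w"
      using exhaustive_common_extension[OF E(2) xL eta xe] x K(4) by blast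
    have "d b = - n + qlub P n (d mu)" "d a = - d mu + qlub P n (d mu)"
      using ba(6,7) K(3)[OF x] by simp_all
    then have "d b \<in> D" "d a \<in> Da"
      unfolding D_def Da_def using mu(1) d_in_P[OF ba(1)] d_in_P[OF ba(2)] by auto
    moreover have "g (r b) = x"
      using ba(3) g(2) x K(2) by (metis subsetD)
    moreover have "r b \<in> s ` K" "r a \<in> s ` E"
      using ba(3,4) x mu(1) by (metis image_eqI)+
    ultimately have "b \<in> F"
      unfolding F_def Z_def composable_pairs_def using ba(1,2,4,5) mu
      by (auto intro!: image_eqI[of _ _ "(mu, a)"])
    then show ?thesis
      using ba(3,8) xe by auto
  qed
  ultimately show ?thesis
    using that unfolding F_def by blast
qed

text \<open>The pulled-back set has to be exhaustive on a whole neighbourhood of s(\<gamma>), so the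
  construction runs over a compact neighbourhood K of \<gamma> on which s has a continuous inverse;
  injectivity of s on K then singles out \<gamma> again.\<close>

lemma exhaustive_pullback:
  assumes gam: "gam \<in> L" and E: "compactin T E" "exhaustive L r s cmp E"
    and UE: "openin TV UE" "r gam \<in> UE" "UE \<subseteq> r ` E"
  obtains F where "compactin T F" "exhaustive L r s cmp F"
    "\<exists>W. openin TV W \<and> s gam \<in> W \<and> W \<subseteq> r ` F"
    "\<And>b. b \<in> F \<Longrightarrow> s gam = r b \<Longrightarrow> \<exists>mu\<in>E. \<exists>a\<in>L. s mu = r a \<and> cmp gam b = cmp mu a"
proof -
  obtain U g where U: "openin T U" "gam \<in> U"
    and g: "continuous_map (subtopology TV (s ` U)) T g" "\<And>x. x \<in> U \<Longrightarrow> g (s x) = x"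
    using local_section_of_s[OF gam] by blast
  have UL: "U \<subseteq> L"
    using openin_subset[OF U(1)] .
  define G where "G = U \<inter> {x \<in> L. d x = d gam} \<inter> {x \<in> L. r x \<in> UE}"
  have "openin T G"
    unfolding G_def
    using U(1) degree_level_openin openin_continuous_map_preimage[OF continuous_r UE(1)] by blast
  moreover have "gam \<in> G"
    unfolding G_def using U gam UE by auto
  ultimately obtain W K where WK: "openin T W" "compactin T K" "gam \<in> W" "W \<subseteq> K" "K \<subseteq> G"
    using compact_neighbourhood by blast
  have K: "K \<subseteq> U" "\<And>x. x \<in> K \<Longrightarrow> d x = d gam" "r ` K \<subseteq> r ` E"
    using WK(5) UE(3) unfolding G_def by auto
  obtain F where F: "compactin T F" "F \<subseteq> L"
    and F_factor: "\<And>b. b \<in> F \<Longrightarrow> \<exists>x\<in>K. s x = r b \<and> (\<exists>mu\<in>E. \<exists>a\<in>L. s mu = r a \<and> cmp x b = cmp mu a)"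
    and F_cover: "\<And>x eta. x \<in> K \<Longrightarrow> eta \<in> L \<Longrightarrow> s x = r eta \<Longrightarrow>
       \<exists>b\<in>F. r b = r eta \<and> (\<exists>w. common_upper_bound L r s cmp eta b w)"
    using pullback_along_compact[OF E WK(2) K g UL] by blast
  have "exhaustive L r s cmp F"
    unfolding exhaustive_def
  proof (intro conjI ballI impI F(2))
    fix eta assume "eta \<in> L" "r eta \<in> r ` F"
    then show "\<exists>mu\<in>F. \<exists>z. common_upper_bound L r s cmp eta mu z"
      using F_factor F_cover by (metis imageE)
  qed
  moreover have "s ` W \<subseteq> r ` F"
  proof
    fix v assume "v \<in> s ` W"
    then obtain x where x: "x \<in> K" "v = s x"
      using WK(4) by blast
    then have "v \<in> V"
      using s_in_vertices K(1) UL by auto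
    then have "v \<in> L" "r v = v"
      using vertices_subset r_vertex by auto
    then show "v \<in> r ` F"
      using F_cover[OF x(1)] x(2) by (metis image_eqI)
  qed
  moreover have "openin TV (s ` W)"
    using local_homeomorphism_imp_openin_image[OF local_homeomorphism_s WK(1)] .
  moreover have "\<exists>mu\<in>E. \<exists>a\<in>L. s mu = r a \<and> cmp gam b = cmp mu a" if "b \<in> F" "s gam = r b" for b
  proof -
    obtain x where "x \<in> K" "s x = r b" "\<exists>mu\<in>E. \<exists>a\<in>L. s mu = r a \<and> cmp x b = cmp mu a"
      using F_factor \<open>b \<in> F\<close> by blast
    moreover have "x = gam" if "x \<in> K" "s x = s gam"
      using that g(2) K(1) U(2) by (metis subsetD)
    ultimately show ?thesis
      using \<open>s gam = r b\<close> by metis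
  qed
  ultimately show ?thesis
    using that F(1) WK(3) by blast
qed

lemma extendable_prefix:
  assumes A: "A \<in> path_space T r s cmp" and ext: "extendable T TV r s cmp A zeta"
    and le: "path_le L r s cmp lam zeta"
  shows "extendable T TV r s cmp A lam"
  unfolding extendable_def
proof (intro conjI allI impI)
  show "lam \<in> A"
    using path_space_hereditary[OF A _ le] ext unfolding extendable_def by blast
  obtain gam where gam: "gam \<in> L" "s lam = r gam" "zeta = cmp lam gam" and lamL: "lam \<in> L"
    using le unfolding path_le_def by blast
  have s_zeta: "s zeta = s gam"
    using s_cmp lamL gam by auto
  fix E assume "compactin T E \<and> exhaustive L r s cmp E \<and> (\<exists>U. openin TV U \<and> s lam \<in> U \<and> U \<subseteq> r ` E)"
  then obtain F where F: "compactin T F" "exhaustive L r s cmp F"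
      "\<exists>W. openin TV W \<and> s zeta \<in> W \<and> W \<subseteq> r ` F"
    and F_factor: "\<And>b. b \<in> F \<Longrightarrow> s gam = r b \<Longrightarrow> \<exists>mu\<in>E. \<exists>a\<in>L. s mu = r a \<and> cmp gam b = cmp mu a"
    using exhaustive_pullback[OF gam(1)] gam(2) s_zeta by metis
  then obtain b where b: "b \<in> F" "s zeta = r b" "cmp zeta b \<in> A"
    using ext unfolding extendable_def by blast
  then obtain mu a where mu: "mu \<in> E" "a \<in> L" "s mu = r a" "cmp gam b = cmp mu a"
    using F_factor s_zeta by metis
  have bL: "b \<in> L" and muL: "mu \<in> L"
    using b(1) F(2) mu(1) \<open>compactin T E \<and> exhaustive L r s cmp E \<and> _\<close>
    unfolding exhaustive_def by auto
  have gb: "s gam = r b"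
    using b(2) s_zeta by simp
  have lam_mu: "s lam = r mu"
    using r_cmp[OF muL mu(2,3)] r_cmp[OF gam(1) bL gb] mu(4) gam(2) by simp
  have "cmp zeta b = cmp (cmp lam mu) a"
    using gam(3) cmp_assoc[OF lamL gam(1) bL gam(2) gb] mu(4) cmp_assoc[OF lamL muL mu(2) lam_mu mu(3)]
    by simp
  then have "path_le L r s cmp (cmp lam mu) (cmp zeta b)"
    using path_le_cmp[OF cmp_closed[OF lamL muL lam_mu] mu(2)] s_cmp[OF lamL muL lam_mu] mu(3) by simp
  then show "\<exists>mu\<in>E. s lam = r mu \<and> cmp lam mu \<in> A"
    using path_space_hereditary[OF A b(3)] mu(1) lam_mu by blast
qed

lemma range_vertex_path_space:
  assumes B: "B \<in> path_space T r s cmp" and nu: "nu \<in> B"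
  shows "range_vertex V r B = r nu"
  unfolding range_vertex_def
proof (rule the_equality)
  have "r lam = r nu" if "lam \<in> B" for lam
    using path_space_directed[OF B that nu] path_le_imp_r_eq
    unfolding common_upper_bound_def by metis
  then show "r nu \<in> V \<and> (\<forall>lam\<in>B. r lam = r nu)"
    using r_in_vertices path_space_subset[OF B] nu by blast
next
  fix x assume "x \<in> V \<and> (\<forall>lam\<in>B. r lam = x)"
  then show "x = r nu"
    using nu by metis
qed

lemma cmp_in_prefix_path:
  "nu \<in> L \<Longrightarrow> rho \<in> L \<Longrightarrow> s rho = r nu \<Longrightarrow> nu \<in> B \<Longrightarrow> cmp rho nu \<in> prefix_path L r s cmp rho B"
  unfolding prefix_path_def using path_le_refl cmp_closed by blast

lemma prefix_path_in_path_space: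
  assumes B: "B \<in> path_space T r s cmp" and rho: "rho \<in> L" and sr: "\<And>nu. nu \<in> B \<Longrightarrow> s rho = r nu"
  shows "prefix_path L r s cmp rho B \<in> path_space T r s cmp"
proof (rule path_spaceI)
  let ?R = "prefix_path L r s cmp rho B"
  show "?R \<noteq> {}"
    using B cmp_in_prefix_path rho sr path_space_subset[OF B] unfolding path_space_def by blast
  show "?R \<subseteq> L"
    unfolding prefix_path_def path_le_def by blast
next
  fix lam mu assume "lam \<in> prefix_path L r s cmp rho B" "path_le L r s cmp mu lam"
  then show "mu \<in> prefix_path L r s cmp rho B"
    unfolding prefix_path_def using path_le_trans by blast
next
  fix x y assume "x \<in> prefix_path L r s cmp rho B" "y \<in> prefix_path L r s cmp rho B"
  then obtain n1 n2 where n: "n1 \<in> B" "n2 \<in> B"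
      "path_le L r s cmp x (cmp rho n1)" "path_le L r s cmp y (cmp rho n2)"
    unfolding prefix_path_def by blast
  obtain nu where nu: "nu \<in> B" "common_upper_bound L r s cmp n1 n2 nu"
    using path_space_directed[OF B n(1,2)] by blast
  have mono: "path_le L r s cmp (cmp rho n) (cmp rho nu)" if "n \<in> B" "path_le L r s cmp n nu" for n
  proof -
    obtain a where a: "a \<in> L" "s n = r a" "nu = cmp n a"
      using \<open>path_le L r s cmp n nu\<close> unfolding path_le_def by blast
    have nL: "n \<in> L"
      using that path_space_subset[OF B] by blast
    have "cmp rho nu = cmp (cmp rho n) a"
      using cmp_assoc[OF rho nL a(1) sr[OF that(1)] a(2)] a(3) by simp
    then show ?thesis
      using path_le_cmp[OF cmp_closed[OF rho nL sr[OF that(1)]] a(1)] s_cmp[OF rho nL sr[OF that(1)]] a(2)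
      by simp
  qed
  have "path_le L r s cmp x (cmp rho nu)" "path_le L r s cmp y (cmp rho nu)"
    using n nu mono path_le_trans unfolding common_upper_bound_def by blast+
  moreover have "cmp rho nu \<in> prefix_path L r s cmp rho B"
    using cmp_in_prefix_path rho sr nu(1) path_space_subset[OF B] by blast
  ultimately show "\<exists>z\<in>prefix_path L r s cmp rho B. common_upper_bound L r s cmp x y z"
    unfolding common_upper_bound_def by blast
qed

lemma extendable_cmp_prefix_path:
  assumes B: "B \<in> boundary_path_space T TV r s cmp" and rho: "rho \<in> L"
    and sr: "\<And>nu. nu \<in> B \<Longrightarrow> s rho = r nu" and nu: "nu \<in> B"
  shows "extendable T TV r s cmp (prefix_path L r s cmp rho B) (cmp rho nu)"
  unfolding extendable_def
proof (intro conjI allI impI)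
  have BL: "B \<subseteq> L"
    using B path_space_subset unfolding boundary_path_space_def by blast
  then have nuL: "nu \<in> L"
    using nu by blast
  show "cmp rho nu \<in> prefix_path L r s cmp rho B"
    using cmp_in_prefix_path[OF nuL rho sr[OF nu] nu] .
  have s_eq: "s (cmp rho nu) = s nu"
    using s_cmp[OF rho nuL sr[OF nu]] .
  fix E assume E: "compactin T E \<and> exhaustive L r s cmp E \<and> (\<exists>U. openin TV U \<and> s (cmp rho nu) \<in> U \<and> U \<subseteq> r ` E)"
  moreover have "extendable T TV r s cmp B nu"
    using B nu unfolding boundary_path_space_def by blast
  ultimately obtain mu where mu: "mu \<in> E" "s nu = r mu" "cmp nu mu \<in> B"
    using s_eq unfolding extendable_def by auto
  have muL: "mu \<in> L"
    using E mu(1) unfolding exhaustive_def by blast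
  have "cmp (cmp rho nu) mu = cmp rho (cmp nu mu)"
    using cmp_assoc[OF rho nuL muL sr[OF nu] mu(2)] .
  moreover have "cmp rho (cmp nu mu) \<in> prefix_path L r s cmp rho B"
    using cmp_in_prefix_path[OF cmp_closed[OF nuL muL mu(2)] rho _ mu(3)] sr[OF mu(3)] by blast
  ultimately show "\<exists>mu\<in>E. s (cmp rho nu) = r mu \<and> cmp (cmp rho nu) mu \<in> prefix_path L r s cmp rho B"
    using mu s_eq by auto
qed

lemma prefix_path_in_boundary_path_space:
  assumes B: "B \<in> boundary_path_space T TV r s cmp" and rho: "rho \<in> L"
    and sr: "s rho = range_vertex V r B"
  shows "prefix_path L r s cmp rho B \<in> boundary_path_space T TV r s cmp"
proof -
  have BP: "B \<in> path_space T r s cmp"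
    using B unfolding boundary_path_space_def by blast
  then have sr': "s rho = r nu" if "nu \<in> B" for nu
    using sr range_vertex_path_space that by simp
  have RP: "prefix_path L r s cmp rho B \<in> path_space T r s cmp"
    using prefix_path_in_path_space[OF BP rho sr'] .
  have "extendable T TV r s cmp (prefix_path L r s cmp rho B) lam"
    if lam: "lam \<in> prefix_path L r s cmp rho B" for lam
  proof -
    obtain nu where "nu \<in> B" "path_le L r s cmp lam (cmp rho nu)"
      using lam unfolding prefix_path_def by blast
    then show ?thesis
      using extendable_prefix[OF RP extendable_cmp_prefix_path[OF B rho sr']] by blast
  qed
  then show ?thesis
    using RP unfolding boundary_path_space_def by blast
qed

end

theorem proposition6p16:
  fixes P :: "'q::group_add set"
    and T TV :: "'a topology"
    and r s :: "'a \<Rightarrow> 'a"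
    and cmp :: "'a \<Rightarrow> 'a \<Rightarrow> 'a"
    and d :: "'a \<Rightarrow> 'q"
  assumes "quasi_lattice_ordered P"
    and "top_P_graph P T TV r s cmp d"
    and "rd_proper P T TV r d"
  shows "closedin (path_space_topology T r s cmp) (boundary_path_space T TV r s cmp) \<and>
    (\<forall>A n. A \<in> boundary_path_space T TV r s cmp \<longrightarrow> n \<in> P \<longrightarrow>
            shift_path (topspace T) r s cmp d A n \<noteq> {} \<longrightarrow>
            shift_path (topspace T) r s cmp d A n \<in> boundary_path_space T TV r s cmp) \<and>
    (\<forall>B rho. B \<in> boundary_path_space T TV r s cmp \<longrightarrow> rho \<in> topspace T \<longrightarrow>
            s rho = range_vertex (topspace TV) r B \<longrightarrow>
            prefix_path (topspace T) r s cmp rho B \<in> boundary_path_space T TV r s cmp)"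
proof -
  interpret proper_P_graph P T TV r s cmp d
    using assms by unfold_locales
  show ?thesis
    using boundary_path_space_closedin shift_path_in_boundary_path_space
      prefix_path_in_boundary_path_space by blast
qed

end
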